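(* For every integer $n \geq 7$, the quotient $\mathbb{Z}[\operatorname{SL}_2(\mathbb{Z})]/((u-1)^n)$ of the group ring by the two-sided ideal generated by $(u-1)^n$ is not a finitely generated $\mathbb{Z}$-module.
   Context: $u = \begin{pmatrix}1 & 1 \\ 0 & 1\end{pmatrix}\in\operatorname{SL}_2(\mathbb{Z})$, and $\mathbb{Z}[\operatorname{SL}_2(\mathbb{Z})]$ is the integral group ring of the abstract group $\operatorname{SL}_2(\mathbb{Z})$. *)

theory Defs
  imports "HOL-Analysis.Analysis" "HOL-Library.Poly_Mapping"
begin

typedef sl2z = "{A :: int^2^2. det A = 1}"
  morphisms sl2_mat Abs_sl2z
  by (rule exI[of _ "mat 1"]) (simp add: det_I)

text \<open>In order to reuse the
  group-ring (convolution) multiplication of HOL-Library.Poly_Mapping, which is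
  phrased for index types of class monoid_add, we write the (non-commutative)
  group law of SL_2(Z) additively: 0 is the identity matrix and g + h is the
  matrix product g h.\<close>

instantiation sl2z :: monoid_add
begin
definition zero_sl2z :: sl2z where "zero_sl2z = Abs_sl2z (mat 1)"
definition plus_sl2z :: "sl2z \<Rightarrow> sl2z \<Rightarrow> sl2z"
  where "plus_sl2z g h = Abs_sl2z (sl2_mat g ** sl2_mat h)"
instance
proof
  fix a b c :: sl2z
  have m: "det (sl2_mat x) = 1" for x using sl2_mat[of x] by simp
  have mm: "sl2_mat (x + y) = sl2_mat x ** sl2_mat y" for x y
    unfolding plus_sl2z_def
    by (rule Abs_sl2z_inverse) (simp add: det_mul m)
  show "a + b + c = a + (b + c)"
    by (rule sl2_mat_inject[THEN iffD1]) (simp add: mm matrix_mul_assoc)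
  have z: "sl2_mat 0 = mat 1"
    unfolding zero_sl2z_def by (rule Abs_sl2z_inverse) (simp add: det_I)
  show "0 + a = a"
    by (rule sl2_mat_inject[THEN iffD1]) (simp add: mm z)
  show "a + 0 = a"
    by (rule sl2_mat_inject[THEN iffD1]) (simp add: mm z)
qed
end

definition u_mat :: "int^2^2" where
  "u_mat = (\<chi> i j. if i = 2 \<and> j = 1 then 0 else 1)"

lemma u_mat_det: "det u_mat = 1"
  by (simp add: det_2 u_mat_def)

definition u :: sl2z where "u = Abs_sl2z u_mat"

type_synonym zsl2 = "sl2z \<Rightarrow>\<^sub>0 int"

definition grp_elt :: "sl2z \<Rightarrow> zsl2" where
  "grp_elt g = Poly_Mapping.single g 1"

definition twosided_ideal_gen :: "'a::ring_1 \<Rightarrow> 'a set" where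
  "twosided_ideal_gen x = {(\<Sum>i<m. a i * x * b i) | (m::nat) a b. True}"

definition quotient_fg_Z_module :: "'a::ring_1 set \<Rightarrow> bool" where
  "quotient_fg_Z_module I \<longleftrightarrow>
     (\<exists>S. finite S \<and> (\<forall>r. \<exists>c :: 'a \<Rightarrow> int. r - (\<Sum>s\<in>S. of_int (c s) * s) \<in> I))"

end

theory Submission
  imports Defs
begin

(*
  The group SL2(Z) is generated by S = [[0,-1],[1,0]] and R = [[0,-1],[1,1]] subject only to
  S^4 = 1 and R^3 = S^2, and u = S^3 R.  In SL2(R) take X of order 4 and Y with Y^3 = X^2 = -1
  such that X^3 Y has trace lambda = 2 cos(6 pi/7), a root of x^3 + x^2 - 2x - 1; then
  (X^3 Y)^7 = 1.  This gives a representation rho of SL2(Z) with rho(u)^7 = 1 whose image is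
  infinite, as it contains a hyperbolic element.  Since (g - 1)^7 = g^7 - 1 modulo 7, the element
  (u - 1)^7, and hence the ideal generated by (u - 1)^n for n >= 7, lies in the kernel of the
  induced map Z[SL2(Z)] -> F_7[rho(SL2(Z))].  So the quotient maps onto an F_7-vector space of
  infinite dimension and cannot be finitely generated.

  The representation is obtained from the presentation through the normal form +-R^b M S^a
  (b < 3) of SL2(Z), where M is nonnegative and hence, by the Euclidean algorithm, a unique
  product of T = [[1,1],[0,1]] and L = [[1,0],[1,1]].
*)

section \<open>Two-by-two matrices\<close>

datatype 'a mat2 = Mat2 'a 'a 'a 'a

instantiation mat2 :: (comm_ring_1) monoid_mult
begin
definition one_mat2 :: "'a mat2" where "one_mat2 = Mat2 1 0 0 1"
fun times_mat2 :: "'a mat2 \<Rightarrow> 'a mat2 \<Rightarrow> 'a mat2" where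
  "Mat2 a b c d * Mat2 a' b' c' d' =
     Mat2 (a*a' + b*c') (a*b' + b*d') (c*a' + d*c') (c*b' + d*d')"
instance
proof
  fix A B C :: "'a mat2"
  show "A * B * C = A * (B * C)"
    by (cases A; cases B; cases C) (simp add: algebra_simps)
  show "1 * A = A" "A * 1 = A" by (cases A; simp add: one_mat2_def)+
qed
end

fun det2 :: "'a::comm_ring_1 mat2 \<Rightarrow> 'a" where
  "det2 (Mat2 a b c d) = a*d - b*c"

fun trace2 :: "'a::comm_ring_1 mat2 \<Rightarrow> 'a" where
  "trace2 (Mat2 a b c d) = a + d"

lemma det2_mult: "det2 (A * B) = det2 A * det2 B"
  by (cases A; cases B) (simp add: algebra_simps)

lemma det2_one [simp]: "det2 1 = 1"
  by (simp add: one_mat2_def)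

lemma trace2_one: "trace2 (1 :: 'a::comm_ring_1 mat2) = 2"
  by (simp add: one_mat2_def)

text \<open>Cayley-Hamilton, in trace form.\<close>
lemma trace2_mult_square:
  "trace2 (P * (A * A)) = trace2 A * trace2 (P * A) - det2 A * trace2 P"
  by (cases P; cases A) (simp add: algebra_simps)

text \<open>The Lucas sequence U_n(t, 1).  Iterating Cayley-Hamilton A^2 = t A - 1 for a matrix of
  determinant one and trace t gives A^(n+1) = U_(n+1) A - U_n.\<close>
fun lucas_U :: "'a::comm_ring_1 \<Rightarrow> nat \<Rightarrow> 'a" where
  "lucas_U t 0 = 0"
| "lucas_U t (Suc 0) = 1"
| "lucas_U t (Suc (Suc n)) = t * lucas_U t (Suc n) - lucas_U t n"

lemma mat2_power_Suc_lucas: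
  assumes "a*d - b*c = 1"
  defines "U \<equiv> lucas_U (a + d)"
  shows "Mat2 a b c d ^ Suc n =
    Mat2 (U (Suc n) * a - U n) (U (Suc n) * b) (U (Suc n) * c) (U (Suc n) * d - U n)"
proof (induction n)
  case 0 show ?case by (simp add: U_def)
next
  case (Suc n)
  have bc: "x * b * c = x * (a * d - 1)" and cb: "x * c * b = x * (a * d - 1)" for x
    using assms by (simp_all add: algebra_simps)
  have "Mat2 a b c d ^ Suc (Suc n) = Mat2 a b c d ^ Suc n * Mat2 a b c d"
    by (rule power_Suc2)
  also have "\<dots> = Mat2 (U (Suc (Suc n)) * a - U (Suc n)) (U (Suc (Suc n)) * b)
      (U (Suc (Suc n)) * c) (U (Suc (Suc n)) * d - U (Suc n))"
    unfolding Suc U_def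
    by (simp only: times_mat2.simps lucas_U.simps bc cb) (simp add: algebra_simps)
  finally show ?case .
qed

lemma strict_mono_linear_recurrence:
  fixes x :: "nat \<Rightarrow> 'a::linordered_idom"
  assumes "\<And>n. x (Suc (Suc n)) = t * x (Suc n) - x n" "2 \<le> t" "0 \<le> x 0" "x 0 < x 1"
  shows "strict_mono x"
proof -
  have "0 \<le> x n \<and> x n < x (Suc n)" for n
  proof (induction n)
    case (Suc n)
    have "2 * x (Suc n) \<le> t * x (Suc n)"
      using Suc assms(2) by (intro mult_right_mono) auto
    then have "x (Suc n) < x (Suc (Suc n))" using Suc assms(1)[of n] by linarith
    then show ?case using Suc by linarith
  qed (use assms in auto)
  then show ?thesis by (simp add: strict_mono_Suc_iff)
qed

lemma inj_power_if_trace_gt_2: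
  fixes A :: "'a::linordered_idom mat2"
  assumes "det2 A = 1" and "2 < trace2 A"
  shows "inj (\<lambda>n. A ^ n)"
proof -
  have "strict_mono (\<lambda>n. trace2 (A ^ n))"
  proof (rule strict_mono_linear_recurrence)
    fix n
    have "A ^ Suc (Suc n) = A ^ n * (A * A)" "A ^ Suc n = A ^ n * A"
      by (metis mult.assoc power_Suc2)+
    then show "trace2 (A ^ Suc (Suc n)) = trace2 A * trace2 (A ^ Suc n) - trace2 (A ^ n)"
      using trace2_mult_square[of "A ^ n" A] assms(1) by simp
  qed (use assms in \<open>simp_all add: trace2_one\<close>)
  then show ?thesis by (intro injI) (metis strict_mono_eq)
qed

lemma lucas_U_6_7:
  fixes t :: "'a::comm_ring_1"
  shows "lucas_U t 6 = (t^3 + t^2 - 2*t - 1) * (t^2 - t - 1) - 1"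
    and "lucas_U t 7 = (t^3 + t^2 - 2*t - 1) * (t^3 - t^2 - 2*t + 1)"
proof -
  have rec: "lucas_U t (n + 2) = t * lucas_U t (n + 1) - lucas_U t n" for n
    by (simp add: numeral_2_eq_2)
  have U5: "lucas_U t 5 = t^4 - 3*t^2 + 1"
    by (simp add: numeral_eq_Suc algebra_simps)
  have U4: "lucas_U t 4 = t^3 - 2*t"
    by (simp add: numeral_eq_Suc algebra_simps)
  have U6: "lucas_U t 6 = t^5 - 4*t^3 + 3*t"
    using rec[of 4] U4 U5 by (simp add: algebra_simps eval_nat_numeral)
  have U7: "lucas_U t 7 = t^6 - 5*t^4 + 6*t^2 - 1"
    using rec[of 5] U5 U6 by (simp add: algebra_simps eval_nat_numeral)
  show "lucas_U t 6 = (t^3 + t^2 - 2*t - 1) * (t^2 - t - 1) - 1"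
    unfolding U6 by (simp add: algebra_simps eval_nat_numeral)
  show "lucas_U t 7 = (t^3 + t^2 - 2*t - 1) * (t^3 - t^2 - 2*t + 1)"
    unfolding U7 by (simp add: algebra_simps eval_nat_numeral)
qed

text \<open>The roots of x^3 + x^2 - 2x - 1 are 2 cos(2 pi k/7), so the eigenvalues are primitive
  seventh roots of unity.\<close>
lemma mat2_power_seven_eq_one:
  fixes A :: "'a::comm_ring_1 mat2"
  assumes "det2 A = 1" and "trace2 A ^ 3 + trace2 A ^ 2 - 2 * trace2 A - 1 = 0"
  shows "A ^ 7 = 1"
proof (cases A)
  case (Mat2 a b c d)
  define U where "U = lucas_U (a + d)"
  have "U 7 = 0" "U 6 = -1"
    using assms(2) unfolding U_def Mat2 trace2.simps lucas_U_6_7 by simp_all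
  moreover have "A ^ Suc 6 = Mat2 (U (Suc 6) * a - U 6) (U (Suc 6) * b) (U (Suc 6) * c) (U (Suc 6) * d - U 6)"
    unfolding U_def Mat2 using assms(1) Mat2 by (intro mat2_power_Suc_lucas) simp
  ultimately show ?thesis by (simp add: one_mat2_def)
qed

lemma mat2_cube_eq_neg_one:
  fixes A :: "'a::comm_ring_1 mat2"
  assumes "det2 A = 1" and "trace2 A = 1"
  shows "A ^ 3 = Mat2 (-1) 0 0 (-1)"
proof (cases A)
  case (Mat2 a b c d)
  have "lucas_U (1::'a) 2 = 1" "lucas_U (1::'a) 3 = 0"
    by (simp_all add: numeral_2_eq_2 numeral_3_eq_3)
  with assms Mat2 mat2_power_Suc_lucas[of a d b c 2] show ?thesis
    by simp
qed

section \<open>Generators of SL2(Z) and nonnegative matrices\<close>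

text \<open>S and R generate SL2(Z), T and L generate the monoid of nonnegative matrices of
  determinant one, and N is minus the identity.\<close>

definition mat_S :: "int mat2" where "mat_S = Mat2 0 (-1) 1 0"
definition mat_R :: "int mat2" where "mat_R = Mat2 0 (-1) 1 1"
definition mat_T :: "int mat2" where "mat_T = Mat2 1 1 0 1"
definition mat_L :: "int mat2" where "mat_L = Mat2 1 0 1 1"
definition mat_N :: "int mat2" where "mat_N = Mat2 (-1) 0 0 (-1)"

lemmas mat_gen_defs = mat_S_def mat_R_def mat_T_def mat_L_def mat_N_def one_mat2_def

lemma mat_S_mult_S: "mat_S * mat_S = mat_N"
  and mat_R_cube: "mat_R * mat_R * mat_R = mat_N"
  and mat_N_mult_N: "mat_N * mat_N = 1"
  and mat_S_mult_R: "mat_S * mat_R = mat_N * mat_T"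
  and mat_T_mult_R: "mat_T * mat_R = mat_L"
  and mat_L_mult_R: "mat_L * mat_R = mat_S"
  and mat_T_eq_S_R: "mat_S * mat_S * mat_S * mat_R = mat_T"
  by (simp_all add: mat_gen_defs)

lemma mat_N_commute: "mat_N * M = M * mat_N"
  by (cases M) (simp add: mat_N_def)

lemma det2_mat_S: "det2 mat_S = 1" and det2_mat_R: "det2 mat_R = 1"
  by (simp_all add: mat_S_def mat_R_def)

fun nonneg_sl2 :: "int mat2 \<Rightarrow> bool" where
  "nonneg_sl2 (Mat2 a b c d) \<longleftrightarrow> 0 \<le> a \<and> 0 \<le> b \<and> 0 \<le> c \<and> 0 \<le> d \<and> a*d - b*c = 1"

lemma nonneg_sl2_line_sums_pos:
  assumes "nonneg_sl2 (Mat2 a b c d)"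
  shows "0 < a + b" "0 < c + d" "0 < a + c" "0 < b + d"
proof -
  have nonneg: "0 \<le> a" "0 \<le> b" "0 \<le> c" "0 \<le> d"
    using assms by auto
  have nonzero: "a \<noteq> 0 \<or> b \<noteq> 0" "c \<noteq> 0 \<or> d \<noteq> 0" "a \<noteq> 0 \<or> c \<noteq> 0" "b \<noteq> 0 \<or> d \<noteq> 0"
    using assms by auto
  show "0 < a + b" using nonneg(1,2) nonzero(1) by auto
  show "0 < c + d" using nonneg(3,4) nonzero(2) by auto
  show "0 < a + c" using nonneg(1,3) nonzero(3) by auto
  show "0 < b + d" using nonneg(2,4) nonzero(4) by auto
qed

lemma nonneg_sl2_rows_comparable:
  assumes "nonneg_sl2 (Mat2 a b c d)"
  shows "(c \<le> a \<and> d \<le> b) \<or> (a \<le> c \<and> b \<le> d) \<or> Mat2 a b c d = 1"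
proof (rule ccontr)
  assume contra: "\<not> ?thesis"
  have nonneg: "0 \<le> a" "0 \<le> b" "0 \<le> c" "0 \<le> d" and det: "a*d - b*c = 1"
    using assms by auto
  consider "a < c" "d < b" | "b < d" "c < a"
    using contra by (auto simp: one_mat2_def)
  then show False
  proof cases
    case 1
    then have "(a+1)*(d+1) \<le> c*b" using nonneg by (intro mult_mono) auto
    then show False using nonneg det by (simp add: algebra_simps)
  next
    case 2
    then have "(c+1)*(b+1) \<le> a*d" using nonneg by (intro mult_mono) auto
    then have "b + c \<le> 0" using det by (simp add: algebra_simps)
    then have "b = 0" "c = 0" using nonneg by linarith+
    then have "a = 1" "d = 1" using nonneg det by (auto simp: zmult_eq_1_iff)
    then show False using contra \<open>b = 0\<close> \<open>c = 0\<close> by (simp add: one_mat2_def)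
  qed
qed

lemma nonneg_sl2_one [simp]: "nonneg_sl2 1"
  and nonneg_sl2_T: "nonneg_sl2 mat_T"
  and nonneg_sl2_L: "nonneg_sl2 mat_L"
  by (simp_all add: mat_gen_defs)

lemma nonneg_sl2_mult:
  assumes "nonneg_sl2 M" "nonneg_sl2 N"
  shows "nonneg_sl2 (M * N)"
proof -
  obtain a b c d a' b' c' d' where M: "M = Mat2 a b c d" and N: "N = Mat2 a' b' c' d'"
    by (cases M; cases N)
  have "det2 (M * N) = 1"
    unfolding det2_mult using assms M N by simp
  with assms show ?thesis
    by (simp add: M N add_nonneg_nonneg mult_nonneg_nonneg)
qed

lemma nonneg_sl2_cases_left:
  assumes "nonneg_sl2 M"
  obtains "M = 1"
    | M' where "nonneg_sl2 M'" "M = mat_T * M'"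
    | M' where "nonneg_sl2 M'" "M = mat_L * M'"
proof (cases M)
  case (Mat2 a b c d)
  from nonneg_sl2_rows_comparable[OF assms[unfolded Mat2]] consider
    "c \<le> a \<and> d \<le> b" | "a \<le> c \<and> b \<le> d" | "M = 1"
    using Mat2 by blast
  then show ?thesis
  proof cases
    case 1
    then have "nonneg_sl2 (Mat2 (a-c) (b-d) c d)" "M = mat_T * Mat2 (a-c) (b-d) c d"
      using Mat2 assms by (auto simp: mat_T_def algebra_simps)
    then show ?thesis using that(2) by blast
  next
    case 2
    then have "nonneg_sl2 (Mat2 a b (c-a) (d-b))" "M = mat_L * Mat2 a b (c-a) (d-b)"
      using Mat2 assms by (auto simp: mat_L_def algebra_simps)
    then show ?thesis using that(3) by blast
  qed (use that in blast)
qed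

lemma nonneg_sl2_cases_right:
  assumes "nonneg_sl2 M"
  obtains "M = 1"
    | M' where "nonneg_sl2 M'" "M = M' * mat_T"
    | M' where "nonneg_sl2 M'" "M = M' * mat_L"
proof (cases M)
  case (Mat2 a b c d)
  have transp: "nonneg_sl2 (Mat2 a c b d)" using assms Mat2 by (auto simp: algebra_simps)
  from nonneg_sl2_rows_comparable[OF transp] consider
    "b \<le> a \<and> d \<le> c" | "a \<le> b \<and> c \<le> d" | "M = 1"
    using Mat2 by (auto simp: one_mat2_def)
  then show ?thesis
  proof cases
    case 1
    then have "nonneg_sl2 (Mat2 (a-b) b (c-d) d)" "M = Mat2 (a-b) b (c-d) d * mat_L"
      using Mat2 assms by (auto simp: mat_L_def algebra_simps)
    then show ?thesis using that(3) by blast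
  next
    case 2
    then have "nonneg_sl2 (Mat2 a (b-a) c (d-c))" "M = Mat2 a (b-a) c (d-c) * mat_T"
      using Mat2 assms by (auto simp: mat_T_def algebra_simps)
    then show ?thesis using that(2) by blast
  qed (use that in blast)
qed

fun entry_sum :: "int mat2 \<Rightarrow> nat" where
  "entry_sum (Mat2 a b c d) = nat (a + b + c + d)"

lemma entry_sum_T_mult:
  assumes "nonneg_sl2 M"
  shows "entry_sum M < entry_sum (mat_T * M)"
    and entry_sum_L_mult: "entry_sum M < entry_sum (mat_L * M)"
proof -
  obtain a b c d where M: "M = Mat2 a b c d" by (cases M)
  with assms nonneg_sl2_line_sums_pos[of a b c d]
  show "entry_sum M < entry_sum (mat_T * M)" and "entry_sum M < entry_sum (mat_L * M)"
    by (simp_all add: mat_T_def mat_L_def)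
qed

text \<open>TL_eval A B M writes M as a word in T and L by the subtractive Euclidean algorithm and
  evaluates it at T = A, L = B.  Its value is only meaningful for nonnegative M.\<close>
function TL_eval :: "'h::monoid_mult \<Rightarrow> 'h \<Rightarrow> int mat2 \<Rightarrow> 'h" where
  "TL_eval A B (Mat2 a b c d) =
    (if 0 \<le> c \<and> 0 \<le> d \<and> c \<le> a \<and> d \<le> b \<and> 0 < c + d
     then A * TL_eval A B (Mat2 (a - c) (b - d) c d)
     else if 0 \<le> a \<and> 0 \<le> b \<and> a \<le> c \<and> b \<le> d \<and> 0 < a + b
     then B * TL_eval A B (Mat2 a b (c - a) (d - b))
     else 1)"
  by pat_completeness auto
termination
  by (relation "Wellfounded.measure (\<lambda>(_, _, M). entry_sum M)") auto

declare TL_eval.simps [simp del]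

lemma TL_eval_one [simp]: "TL_eval A B 1 = 1"
  by (simp add: one_mat2_def TL_eval.simps)

lemma TL_eval_T_mult:
  assumes "nonneg_sl2 M"
  shows "TL_eval A B (mat_T * M) = A * TL_eval A B M"
proof (cases M)
  case (Mat2 a b c d)
  with assms nonneg_sl2_line_sums_pos[of a b c d] show ?thesis
    by (simp add: mat_T_def TL_eval.simps[of A B "a + c"])
qed

lemma TL_eval_L_mult:
  assumes "nonneg_sl2 M"
  shows "TL_eval A B (mat_L * M) = B * TL_eval A B M"
proof (cases M)
  case (Mat2 a b c d)
  with assms have "\<not> (c = 0 \<and> d = 0)" by auto
  with Mat2 assms nonneg_sl2_line_sums_pos[of a b c d] show ?thesis
    by (auto simp: mat_L_def TL_eval.simps[of A B a b "a + c"])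
qed

lemma TL_eval_T: "TL_eval A B mat_T = A"
  using TL_eval_T_mult[OF nonneg_sl2_one, of A B] by simp

lemma TL_eval_L: "TL_eval A B mat_L = B"
  using TL_eval_L_mult[OF nonneg_sl2_one, of A B] by simp

lemma TL_eval_mult:
  assumes "nonneg_sl2 M" "nonneg_sl2 N"
  shows "TL_eval A B (M * N) = TL_eval A B M * TL_eval A B N"
  using assms(1)
proof (induction "entry_sum M" arbitrary: M rule: less_induct)
  case less
  from less.prems show ?case
  proof (cases rule: nonneg_sl2_cases_left)
    case (2 M')
    have "entry_sum M' < entry_sum M" using 2 entry_sum_T_mult by blast
    then show ?thesis
      using less.hyps 2 assms(2)
      by (simp add: mult.assoc TL_eval_T_mult nonneg_sl2_mult)
  next
    case (3 M')
    have "entry_sum M' < entry_sum M" using 3 entry_sum_L_mult by blast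
    then show ?thesis
      using less.hyps 3 assms(2)
      by (simp add: mult.assoc TL_eval_L_mult nonneg_sl2_mult)
  qed simp
qed

lemma commute_mult:
  fixes C :: "'h::monoid_mult"
  shows "C * A = A * C \<Longrightarrow> C * B = B * C \<Longrightarrow> C * (A * B) = A * B * C"
  by (metis mult.assoc)

lemma TL_eval_commute:
  "C * A = A * C \<Longrightarrow> C * B = B * C \<Longrightarrow> C * TL_eval A B M = TL_eval A B M * C"
proof (induction A B M rule: TL_eval.induct)
  case (1 A B a b c d)
  then show ?case
    by (subst (1 2) TL_eval.simps) (auto simp: commute_mult)
qed

section \<open>A normal form for SL2(Z)\<close>

text \<open>Every integer matrix of determinant one is uniquely N^e R^b M S^a with b < 3 and M
  nonnegative (booleans e, a standing for exponents 0 and 1).\<close>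

definition sl2_nf :: "bool \<Rightarrow> nat \<Rightarrow> bool \<Rightarrow> int mat2 \<Rightarrow> int mat2" where
  "sl2_nf e b a M = (if e then mat_N else 1) * mat_R ^ b * M * (if a then mat_S else 1)"

definition is_sl2_nf :: "int mat2 \<Rightarrow> bool \<times> nat \<times> bool \<times> int mat2 \<Rightarrow> bool" where
  "is_sl2_nf g t \<longleftrightarrow> (case t of (e, b, a, M) \<Rightarrow> b < 3 \<and> nonneg_sl2 M \<and> sl2_nf e b a M = g)"

lemma is_sl2_nf_iff:
  "is_sl2_nf g (e, b, a, M) \<longleftrightarrow> b < 3 \<and> nonneg_sl2 M \<and> sl2_nf e b a M = g"
  by (simp add: is_sl2_nf_def)

lemma sl2_nf_unique:
  assumes "is_sl2_nf g (e, b, a, M)" "is_sl2_nf g (e', b', a', M')"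
  shows "(e, b, a, M) = (e', b', a', M')"
proof -
  obtain p q r w p' q' r' w' where M: "M = Mat2 p q r w" and M': "M' = Mat2 p' q' r' w'"
    by (cases M; cases M')
  have nonneg: "nonneg_sl2 (Mat2 p q r w)" "nonneg_sl2 (Mat2 p' q' r' w')"
    and b: "b < 3" "b' < 3" and eq: "sl2_nf e b a M = sl2_nf e' b' a' M'"
    using assms M M' by (auto simp: is_sl2_nf_iff)
  note sums = nonneg_sl2_line_sums_pos[OF nonneg(1)] nonneg_sl2_line_sums_pos[OF nonneg(2)]
  have "b = 0 \<or> b = 1 \<or> b = 2" "b' = 0 \<or> b' = 1 \<or> b' = 2"
    using b by auto
  then show ?thesis
    using eq nonneg sums
    unfolding M M'
    by (elim disjE; cases e; cases e'; cases a; cases a')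
      (simp_all add: sl2_nf_def mat_gen_defs power2_eq_square)
qed

lemma sign_mult_N: "(if e then mat_N else 1) * mat_N = (if \<not> e then mat_N else 1)"
  by (simp add: mat_N_mult_N)

lemma move_N_left: "E * P * M * mat_N = (E * mat_N) * P * M"
  by (metis mult.assoc mat_N_commute)

lemma is_sl2_nf_mult_S:
  assumes "is_sl2_nf g (e, b, a, M)"
  shows "is_sl2_nf (g * mat_S) (if a then (\<not> e, b, False, M) else (e, b, True, M))"
proof (cases a)
  case True
  have "g * mat_S = (if e then mat_N else 1) * mat_R ^ b * M * (mat_S * mat_S)"
    using assms True by (auto simp: is_sl2_nf_iff sl2_nf_def mult.assoc)
  also have "\<dots> = sl2_nf (\<not> e) b False M"
    by (simp only: mat_S_mult_S move_N_left sign_mult_N sl2_nf_def) simp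
  finally show ?thesis using assms True by (simp add: is_sl2_nf_iff)
qed (use assms in \<open>simp add: is_sl2_nf_iff sl2_nf_def\<close>)

lemma is_sl2_nf_mult_R_S:
  assumes "is_sl2_nf g (e, b, True, M)"
  shows "is_sl2_nf (g * mat_R) (\<not> e, b, False, M * mat_T)"
proof -
  have "g * mat_R = (if e then mat_N else 1) * mat_R ^ b * M * (mat_S * mat_R)"
    using assms by (auto simp: is_sl2_nf_iff sl2_nf_def mult.assoc)
  also have "\<dots> = (if e then mat_N else 1) * mat_R ^ b * (M * mat_T) * mat_N"
    by (simp only: mat_S_mult_R mat_N_commute mult.assoc)
  also have "\<dots> = sl2_nf (\<not> e) b False (M * mat_T)"
    by (simp only: move_N_left sign_mult_N sl2_nf_def) simp
  finally show ?thesis using assms by (simp add: is_sl2_nf_iff nonneg_sl2_mult nonneg_sl2_T)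
qed

lemma is_sl2_nf_mult_R_wrap:
  assumes "is_sl2_nf g (e, 2, False, 1)"
  shows "is_sl2_nf (g * mat_R) (\<not> e, 0, False, 1)"
proof -
  have "g * mat_R = (if e then mat_N else 1) * (mat_R * mat_R * mat_R)"
    using assms by (auto simp: is_sl2_nf_iff sl2_nf_def mult.assoc power2_eq_square)
  then show ?thesis by (simp add: is_sl2_nf_iff mat_R_cube sl2_nf_def mat_N_mult_N)
qed

lemma is_sl2_nf_mult_R_rotate:
  assumes "is_sl2_nf g (e, b, False, 1)" "b \<noteq> 2"
  shows "is_sl2_nf (g * mat_R) (e, Suc b, False, 1)"
  using assms by (auto simp: is_sl2_nf_iff sl2_nf_def mult.assoc power_commutes)

lemma is_sl2_nf_mult_R_T:
  assumes "is_sl2_nf g (e, b, False, M * mat_T)" "nonneg_sl2 M"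
  shows "is_sl2_nf (g * mat_R) (e, b, False, M * mat_L)"
  using assms by (auto simp: is_sl2_nf_iff sl2_nf_def mult.assoc mat_T_mult_R nonneg_sl2_mult nonneg_sl2_L)

lemma is_sl2_nf_mult_R_L:
  assumes "is_sl2_nf g (e, b, False, M * mat_L)" "nonneg_sl2 M"
  shows "is_sl2_nf (g * mat_R) (e, b, True, M)"
  using assms by (auto simp: is_sl2_nf_iff sl2_nf_def mult.assoc mat_L_mult_R)

lemma is_sl2_nf_mult_R:
  assumes "is_sl2_nf g (e, b, a, M)"
  shows "\<exists>t. is_sl2_nf (g * mat_R) t"
proof (cases a)
  case True
  with assms have "is_sl2_nf g (e, b, True, M)" by simp
  then show ?thesis by (blast intro: is_sl2_nf_mult_R_S)
next
  case False
  with assms have nf: "is_sl2_nf g (e, b, False, M)" by simp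
  then have "nonneg_sl2 M" by (simp add: is_sl2_nf_iff)
  then show ?thesis
  proof (cases rule: nonneg_sl2_cases_right)
    case 1
    show ?thesis
    proof (cases "b = 2")
      case True
      then show ?thesis using nf 1 by (blast intro: is_sl2_nf_mult_R_wrap)
    next
      case False
      then show ?thesis using nf 1 by (blast intro: is_sl2_nf_mult_R_rotate)
    qed
  qed (use nf in \<open>blast intro: is_sl2_nf_mult_R_T is_sl2_nf_mult_R_L\<close>)+
qed

inductive_set SR_monoid :: "int mat2 set" where
  one: "1 \<in> SR_monoid"
| mult_S: "g \<in> SR_monoid \<Longrightarrow> g * mat_S \<in> SR_monoid"
| mult_R: "g \<in> SR_monoid \<Longrightarrow> g * mat_R \<in> SR_monoid"

lemma SR_monoid_mult:
  assumes "g \<in> SR_monoid" "h \<in> SR_monoid"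
  shows "g * h \<in> SR_monoid"
  using assms(2)
  by induction (use assms(1) in \<open>auto simp flip: mult.assoc intro: SR_monoid.intros\<close>)

lemma SR_monoid_S: "mat_S \<in> SR_monoid"
  and SR_monoid_R: "mat_R \<in> SR_monoid"
  using SR_monoid.mult_S[OF SR_monoid.one] SR_monoid.mult_R[OF SR_monoid.one] by simp_all

definition shear :: "int \<Rightarrow> int mat2" where
  "shear k = Mat2 1 k 0 1"

lemma shear_in_SR_monoid: "shear k \<in> SR_monoid"
proof (induction k rule: int_induct[where k = 0])
  case base
  show ?case using SR_monoid.one by (simp add: shear_def one_mat2_def)
next
  case (step1 k)
  have "shear (k + 1) = shear k * (mat_S * mat_S * mat_S * mat_R)"
    by (simp add: shear_def mat_gen_defs)
  then show ?case
    using step1 by (simp add: SR_monoid_mult SR_monoid_S SR_monoid_R)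
next
  case (step2 k)
  have "shear (k - 1) = shear k * (mat_R * mat_R * mat_R * mat_R * mat_R * mat_S)"
    by (simp add: shear_def mat_gen_defs)
  then show ?case
    using step2 by (simp add: SR_monoid_mult SR_monoid_S SR_monoid_R)
qed

text \<open>Euclidean algorithm on the lower left entry.\<close>
lemma det2_one_in_SR_monoid:
  "det2 g = 1 \<Longrightarrow> g \<in> SR_monoid"
proof (induction "nat \<bar>case g of Mat2 a b c d \<Rightarrow> c\<bar>" arbitrary: g rule: less_induct)
  case less
  obtain a b c d where g: "g = Mat2 a b c d" by (cases g)
  have det: "a*d - b*c = 1" using less.prems g by simp
  show ?case
  proof (cases "c = 0")
    case True
    then have "a*d = 1" using det by simp
    then consider "a = 1" "d = 1" | "a = -1" "d = -1" by (auto simp: zmult_eq_1_iff)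
    then show ?thesis
    proof cases
      case 1
      then have "g = shear b" using g True by (simp add: shear_def)
      then show ?thesis by (simp add: shear_in_SR_monoid)
    next
      case 2
      then have "g = mat_S * mat_S * shear (-b)" using g True by (simp add: shear_def mat_S_def)
      then show ?thesis by (simp add: SR_monoid_mult SR_monoid_S shear_in_SR_monoid)
    qed
  next
    case False
    define k where "k = - (d div c)"
    define g' where "g' = g * shear k * mat_S"
    have "d mod c = d - c * (d div c)" by (simp add: minus_mult_div_eq_mod)
    then have g': "g' = Mat2 (a*k + b) (-a) (d mod c) (-c)"
      using g by (simp add: g'_def shear_def mat_S_def k_def algebra_simps)
    have "det2 g' = 1"
      using less.prems by (simp add: g'_def det2_mult shear_def mat_S_def)
    moreover have "nat \<bar>d mod c\<bar> < nat \<bar>c\<bar>"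
      using False by (simp add: abs_mod_less)
    ultimately have "g' \<in> SR_monoid" using less.hyps g g' by simp
    moreover have "g = g' * (mat_S * mat_S * mat_S * shear (-k))"
    proof -
      have "shear k * (mat_S * mat_S * mat_S * mat_S) * shear (-k) = 1"
        by (simp add: shear_def mat_gen_defs)
      then show ?thesis by (simp add: g'_def mult.assoc)
    qed
    ultimately show ?thesis by (simp add: SR_monoid_mult SR_monoid_S shear_in_SR_monoid)
  qed
qed

lemma sl2_nf_exists:
  assumes "det2 g = 1"
  obtains t where "is_sl2_nf g t"
proof -
  have "g \<in> SR_monoid" using assms by (rule det2_one_in_SR_monoid)
  then have "\<exists>t. is_sl2_nf g t"
  proof induction
    case one
    have "is_sl2_nf 1 (False, 0, False, 1)" by (simp add: is_sl2_nf_iff sl2_nf_def)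
    then show ?case by blast
  next
    case (mult_S g)
    then show ?case by (metis is_sl2_nf_mult_S prod_cases4)
  next
    case (mult_R g)
    then show ?case by (metis is_sl2_nf_mult_R prod_cases4)
  qed
  then show ?thesis using that by blast
qed

lemma det2_SR_monoid: "g \<in> SR_monoid \<Longrightarrow> det2 g = 1"
  by (induction rule: SR_monoid.induct) (simp_all add: det2_mult det2_mat_S det2_mat_R)

section \<open>Homomorphisms defined by the presentation\<close>

locale sl2z_relations =
  fixes X Y :: "'h::monoid_mult"
  assumes X_pow_4: "X ^ 4 = 1" and Y_cube: "Y ^ 3 = X ^ 2"
begin

text \<open>X^3 Y and X^3 Y^2 are the images of T = S^3 R and L = T R = S^3 R^2.\<close>
abbreviation TL_image :: "int mat2 \<Rightarrow> 'h" where
  "TL_image \<equiv> TL_eval (X^3 * Y) (X^3 * Y^2)"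

definition nf_image :: "bool \<Rightarrow> nat \<Rightarrow> bool \<Rightarrow> int mat2 \<Rightarrow> 'h" where
  "nf_image e b a M =
     (if e then X^2 else 1) * Y^b * TL_image M * (if a then X else 1)"

definition hom :: "int mat2 \<Rightarrow> 'h" where
  "hom g = (case THE t. is_sl2_nf g t of (e, b, a, M) \<Rightarrow> nf_image e b a M)"

lemma hom_eq_nf_image:
  assumes "is_sl2_nf g (e, b, a, M)"
  shows "hom g = nf_image e b a M"
proof -
  have "(THE t. is_sl2_nf g t) = (e, b, a, M)"
    using assms sl2_nf_unique by (intro the_equality) (metis prod_cases4)+
  then show ?thesis by (simp add: hom_def)
qed

lemma X2_commute_Y: "X^2 * Y = Y * X^2"
  unfolding Y_cube[symmetric] by (rule power_commutes)

lemma X2_commute_Y_pow: "X^2 * Y^b = Y^b * X^2"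
  using power_commuting_commutes[of Y "X^2" b] X2_commute_Y by simp

lemma X2_commute_TL_image: "X^2 * TL_image M = TL_image M * X^2"
proof (rule TL_eval_commute)
  have X: "X^2 * X^3 = X^3 * X^2" by (simp flip: power_add)
  show "X^2 * (X^3 * Y) = X^3 * Y * X^2"
    using commute_mult[OF X X2_commute_Y] .
  show "X^2 * (X^3 * Y^2) = X^3 * Y^2 * X^2"
    using commute_mult[OF X X2_commute_Y_pow] .
qed

lemma X2_mult_X2: "X^2 * X^2 = 1"
  using X_pow_4 by (simp flip: power_add)

lemma sign_mult_X2: "(if e then X^2 else 1) * X^2 = (if \<not> e then X^2 else 1)"
  by (simp add: X2_mult_X2 X_pow_4)

lemma move_X2_left: "E * Y^b * TL_image M * X^2 = (E * X^2) * Y^b * TL_image M"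
proof -
  have "E * Y^b * TL_image M * X^2 = E * (Y^b * (X^2 * TL_image M))"
    by (simp only: mult.assoc X2_commute_TL_image)
  also have "\<dots> = E * (X^2 * Y^b * TL_image M)"
    by (simp only: mult.assoc[symmetric] X2_commute_Y_pow)
  finally show ?thesis by (simp only: mult.assoc)
qed

lemma hom_mult_S:
  assumes "det2 g = 1"
  shows "hom (g * mat_S) = hom g * X"
proof -
  obtain e b a M where nf: "is_sl2_nf g (e, b, a, M)"
    using sl2_nf_exists[OF assms] by (metis prod_cases4)
  note nf_S = is_sl2_nf_mult_S[OF nf]
  show ?thesis
  proof (cases a)
    case False
    then have "is_sl2_nf (g * mat_S) (e, b, True, M)" using nf_S by simp
    then have "hom (g * mat_S) = nf_image e b True M" by (rule hom_eq_nf_image)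
    moreover have "hom g = nf_image e b False M" using hom_eq_nf_image[OF nf] False by simp
    ultimately show ?thesis by (simp add: nf_image_def)
  next
    case True
    then have nf': "is_sl2_nf (g * mat_S) (\<not> e, b, False, M)" using nf_S by simp
    have "hom g * X = nf_image e b True M * X" using hom_eq_nf_image[OF nf] True by simp
    also have "\<dots> = (if e then X^2 else 1) * Y^b * TL_image M * X^2"
      by (simp add: nf_image_def mult.assoc power2_eq_square)
    also have "\<dots> = nf_image (\<not> e) b False M"
      by (simp only: move_X2_left sign_mult_X2 nf_image_def) simp
    also have "\<dots> = hom (g * mat_S)"
      using hom_eq_nf_image[OF nf'] by simp
    finally show ?thesis by simp
  qed
qed

lemma TL_image_mult_T: "nonneg_sl2 M \<Longrightarrow> TL_image (M * mat_T) = TL_image M * (X^3 * Y)"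
  by (simp add: TL_eval_mult nonneg_sl2_T TL_eval_T)

lemma TL_image_mult_L: "nonneg_sl2 M \<Longrightarrow> TL_image (M * mat_L) = TL_image M * (X^3 * Y^2)"
  by (simp add: TL_eval_mult nonneg_sl2_L TL_eval_L)

lemma X_pow_5: "X ^ 5 = X"
  using power_add[of X 4 1] X_pow_4 by simp

lemma hL_mult_Y: "X^3 * Y^2 * Y = X"
proof -
  have "X^3 * Y^2 * Y = X^3 * X^2" by (simp add: mult.assoc power_Suc2[symmetric] Y_cube)
  also have "\<dots> = X" by (simp add: X_pow_5)
  finally show ?thesis .
qed

lemma TL_image_mult_T_mult_Y: "nonneg_sl2 M \<Longrightarrow> TL_image (M * mat_T) * Y = TL_image (M * mat_L)"
proof -
  assume M: "nonneg_sl2 M"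
  have "TL_image (M * mat_T) * Y = TL_image M * (X^3 * Y * Y)"
    using M by (simp add: TL_image_mult_T mult.assoc)
  also have "\<dots> = TL_image M * (X^3 * Y^2)"
    by (simp add: mult.assoc power2_eq_square)
  finally show ?thesis
    using M by (simp add: TL_image_mult_L)
qed

lemma TL_image_mult_L_mult_Y: "nonneg_sl2 M \<Longrightarrow> TL_image (M * mat_L) * Y = TL_image M * X"
  using hL_mult_Y by (simp only: TL_image_mult_L mult.assoc)

lemma hom_mult_R_if_nf_S:
  assumes nf: "is_sl2_nf g (e, b, True, M)"
  shows "hom (g * mat_R) = hom g * Y"
proof -
  have M: "nonneg_sl2 M" using nf by (simp add: is_sl2_nf_iff)
  have "hom (g * mat_R) = nf_image (\<not> e) b False (M * mat_T)"
    using nf by (intro hom_eq_nf_image is_sl2_nf_mult_R_S)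
  moreover have "hom g * Y = (if e then X^2 else 1) * Y^b * TL_image M * X^2 * (X^3 * Y)"
    using hom_eq_nf_image[OF nf] by (simp add: nf_image_def mult.assoc X_pow_5)
  ultimately show ?thesis
    using M by (simp only: move_X2_left sign_mult_X2 nf_image_def TL_image_mult_T) (simp add: mult.assoc)
qed

lemma hom_mult_R_if_nf_one:
  assumes nf: "is_sl2_nf g (e, b, False, 1)"
  shows "hom (g * mat_R) = hom g * Y"
proof (cases "b = 2")
  case True
  with nf have "is_sl2_nf (g * mat_R) (\<not> e, 0, False, 1)"
    by (simp add: is_sl2_nf_mult_R_wrap)
  then show ?thesis
    using hom_eq_nf_image[OF nf] True
    by (simp add: hom_eq_nf_image nf_image_def sign_mult_X2 mult.assoc power_Suc2[symmetric] Y_cube)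
next
  case False
  with nf have "is_sl2_nf (g * mat_R) (e, Suc b, False, 1)"
    by (simp add: is_sl2_nf_mult_R_rotate)
  then show ?thesis
    using hom_eq_nf_image[OF nf] by (simp add: hom_eq_nf_image nf_image_def power_commutes mult.assoc)
qed

lemma hom_mult_R:
  assumes "det2 g = 1"
  shows "hom (g * mat_R) = hom g * Y"
proof -
  obtain e b a M where nf: "is_sl2_nf g (e, b, a, M)"
    using sl2_nf_exists[OF assms] by (metis prod_cases4)
  show ?thesis
  proof (cases a)
    case True
    with nf hom_mult_R_if_nf_S show ?thesis by simp
  next
    case False
    with nf have nf: "is_sl2_nf g (e, b, False, M)" by simp
    then have "nonneg_sl2 M" by (simp add: is_sl2_nf_iff)
    then show ?thesis
    proof (cases rule: nonneg_sl2_cases_right)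
      case 1
      with nf hom_mult_R_if_nf_one show ?thesis by simp
    next
      case (2 M')
      with nf have "is_sl2_nf (g * mat_R) (e, b, False, M' * mat_L)"
        by (simp add: is_sl2_nf_mult_R_T)
      then show ?thesis
        using hom_eq_nf_image[OF nf] 2
        by (simp add: hom_eq_nf_image nf_image_def mult.assoc TL_image_mult_T_mult_Y)
    next
      case (3 M')
      with nf have "is_sl2_nf (g * mat_R) (e, b, True, M')"
        by (simp add: is_sl2_nf_mult_R_L)
      then show ?thesis
        using hom_eq_nf_image[OF nf] 3
        by (simp add: hom_eq_nf_image nf_image_def mult.assoc TL_image_mult_L_mult_Y)
    qed
  qed
qed

lemma hom_one: "hom 1 = 1"
proof -
  have "is_sl2_nf 1 (False, 0, False, 1)" by (simp add: is_sl2_nf_iff sl2_nf_def)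
  then show ?thesis by (simp add: hom_eq_nf_image nf_image_def)
qed

lemma hom_mult:
  assumes "det2 g = 1" "det2 h = 1"
  shows "hom (g * h) = hom g * hom h"
proof -
  have "h \<in> SR_monoid" using assms(2) by (rule det2_one_in_SR_monoid)
  then show ?thesis
  proof induction
    case one
    show ?case by (simp add: hom_one)
  next
    case (mult_S h)
    then show ?case
      using assms(1) det2_SR_monoid[of h]
      by (simp add: hom_mult_S det2_mult flip: mult.assoc)
  next
    case (mult_R h)
    then show ?case
      using assms(1) det2_SR_monoid[of h]
      by (simp add: hom_mult_R det2_mult flip: mult.assoc)
  qed
qed

lemma hom_S: "hom mat_S = X"
  using hom_mult_S[of 1] by (simp add: hom_one)

lemma hom_R: "hom mat_R = Y"
  using hom_mult_R[of 1] by (simp add: hom_one)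

end

section \<open>A representation in which u has order 7\<close>

text \<open>lambda7 is 2 cos(6 pi/7).\<close>

definition lambda7 :: real where
  "lambda7 = (SOME x. x \<le> -7/4 \<and> x^3 + x^2 - 2*x - 1 = 0)"

lemma lambda7: "lambda7 \<le> -7/4" "lambda7^3 + lambda7^2 - 2*lambda7 - 1 = 0"
proof -
  have "\<exists>x\<ge>-2. x \<le> -7/4 \<and> x^3 + x^2 - 2*x - 1 = (0::real)"
    by (rule IVT) (auto simp: power3_eq_cube power2_eq_square intro!: continuous_intros)
  then have "\<exists>x. x \<le> -7/4 \<and> x^3 + x^2 - 2*x - 1 = (0::real)" by blast
  from someI_ex[OF this] show "lambda7 \<le> -7/4" "lambda7^3 + lambda7^2 - 2*lambda7 - 1 = 0"
    unfolding lambda7_def by auto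
qed

lemma lambda7_sq: "49/16 \<le> lambda7^2"
proof -
  have "(7/4)^2 \<le> (-lambda7)^2" using lambda7(1) by (intro power_mono) auto
  then show ?thesis by (simp add: power2_eq_square)
qed

definition mu7 :: real where "mu7 = sqrt (lambda7^2 - 3)"

lemma mu7_sq: "mu7^2 = lambda7^2 - 3"
  unfolding mu7_def using lambda7_sq by simp

definition rho_S :: "real mat2" where "rho_S = Mat2 0 (-1) 1 0"

text \<open>rho_R has determinant and trace one, so rho_R^3 = -1; and rho_S^3 rho_R has trace
  lambda7.\<close>
definition rho_R :: "real mat2" where
  "rho_R = Mat2 ((1 + mu7) / 2) (- lambda7 / 2) (lambda7 / 2) ((1 - mu7) / 2)"

lemma rho_S_pow_4: "rho_S ^ 4 = 1"
  by (simp add: rho_S_def one_mat2_def eval_nat_numeral)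

lemma det2_rho_S: "det2 rho_S = 1"
  by (simp add: rho_S_def)

lemma det2_rho_R: "det2 rho_R = 1"
  using mu7_sq by (simp add: rho_R_def field_simps power2_eq_square)

lemma rho_R_cube: "rho_R ^ 3 = rho_S ^ 2"
proof -
  have "trace2 rho_R = 1" by (simp add: rho_R_def field_simps)
  then show ?thesis
    using mat2_cube_eq_neg_one[OF det2_rho_R] by (simp add: rho_S_def power2_eq_square)
qed

lemma rho_S_cube_R_pow_7: "(rho_S ^ 3 * rho_R) ^ 7 = 1"
proof (rule mat2_power_seven_eq_one)
  show "det2 (rho_S ^ 3 * rho_R) = 1"
    by (simp add: det2_mult det2_rho_R rho_S_def eval_nat_numeral)
  have "trace2 (rho_S ^ 3 * rho_R) = lambda7"
    by (simp add: rho_S_def rho_R_def eval_nat_numeral)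
  then show "trace2 (rho_S ^ 3 * rho_R) ^ 3 + trace2 (rho_S ^ 3 * rho_R) ^ 2
      - 2 * trace2 (rho_S ^ 3 * rho_R) - 1 = 0"
    using lambda7(2) by simp
qed

text \<open>The image of S R S R^2, a hyperbolic element.\<close>
definition rho_hyp :: "real mat2" where
  "rho_hyp = rho_S * rho_R * rho_S * rho_R * rho_R"

lemma inj_rho_hyp_power: "inj (\<lambda>n. rho_hyp ^ n)"
proof (rule inj_power_if_trace_gt_2)
  show "det2 rho_hyp = 1"
    by (simp add: rho_hyp_def det2_mult det2_rho_S det2_rho_R)
  have "trace2 rho_hyp = lambda7^2 - 1"
    using mu7_sq by (simp add: rho_hyp_def rho_S_def rho_R_def field_simps power2_eq_square)
  then show "2 < trace2 rho_hyp" using lambda7_sq by simp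
qed

interpretation rep: sl2z_relations rho_S rho_R
  by unfold_locales (rule rho_S_pow_4, rule rho_R_cube)

section \<open>Group rings modulo m\<close>

definition pushforward :: "('a \<Rightarrow> 'b) \<Rightarrow> ('a \<Rightarrow>\<^sub>0 int) \<Rightarrow> ('b \<Rightarrow>\<^sub>0 int)" where
  "pushforward f = frag_extend (\<lambda>x. frag_of (f x))"

lemma pushforward_frag_of [simp]: "pushforward f (frag_of x) = frag_of (f x)"
  and pushforward_zero [simp]: "pushforward f 0 = 0"
  and pushforward_diff [simp]: "pushforward f (p - q) = pushforward f p - pushforward f q"
  and pushforward_add [simp]: "pushforward f (p + q) = pushforward f p + pushforward f q"
  and pushforward_cmul [simp]: "pushforward f (frag_cmul c p) = frag_cmul c (pushforward f p)"
  by (simp_all add: pushforward_def frag_extend_diff frag_extend_add frag_extend_cmul)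

lemma pushforward_sum: "finite A \<Longrightarrow> pushforward f (\<Sum>i\<in>A. p i) = (\<Sum>i\<in>A. pushforward f (p i))"
  by (simp add: pushforward_def frag_extend_sum o_def)

lemma pushforward_pushforward: "pushforward f (pushforward g p) = pushforward (f \<circ> g) p"
  using frag_extend_compose[of "\<lambda>x. frag_of (f x)" g p] by (simp add: pushforward_def o_def)

lemma of_int_mult_poly_mapping: "(of_int c :: 'a::monoid_add \<Rightarrow>\<^sub>0 int) * p = frag_cmul c p"
proof -
  have "(of_int c :: 'a \<Rightarrow>\<^sub>0 int) = Poly_Mapping.single 0 c"
    by (simp flip: single_of_int)
  then show ?thesis
    by (simp add: mult_map_scale_conv_mult[symmetric] poly_mapping_eqI map.rep_eq when_def)
qed

lemma pushforward_frag_of_mult: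
  fixes f :: "'a::monoid_add \<Rightarrow> 'b::monoid_add"
  assumes "\<And>x y. f (x + y) = f x + f y"
  shows "pushforward f (frag_of x * p) = frag_of (f x) * pushforward f p"
  using subset_UNIV
  by (induction p rule: frag_induction) (simp_all add: mult_single assms right_diff_distrib)

lemma pushforward_mult:
  fixes f :: "'a::monoid_add \<Rightarrow> 'b::monoid_add"
  assumes "\<And>x y. f (x + y) = f x + f y"
  shows "pushforward f (p * q) = pushforward f p * pushforward f q"
  using subset_UNIV
  by (induction p rule: frag_induction)
    (simp_all add: pushforward_frag_of_mult[OF assms] left_diff_distrib)

lemma pushforward_frag_of_mult_left:
  fixes f :: "'a::monoid_add \<Rightarrow> 'b::monoid_mult"
  assumes "\<And>x y. f (x + y) = f x * f y"
  shows "pushforward f (frag_of x * p) = pushforward (\<lambda>y. f x * y) (pushforward f p)"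
  using subset_UNIV
  by (induction p rule: frag_induction)
    (simp_all add: mult_single assms right_diff_distrib pushforward_pushforward)

lemma pushforward_mult_frag_of_right:
  fixes f :: "'a::monoid_add \<Rightarrow> 'b::monoid_mult"
  assumes "\<And>x y. f (x + y) = f x * f y"
  shows "pushforward f (p * frag_of x) = pushforward (\<lambda>y. y * f x) (pushforward f p)"
  using subset_UNIV
  by (induction p rule: frag_induction)
    (simp_all add: mult_single assms left_diff_distrib pushforward_pushforward)

text \<open>The kernel of the map Z[A] \<rightarrow> (Z/m)[B] induced by f.\<close>
definition ker_mod :: "int \<Rightarrow> ('a \<Rightarrow> 'b) \<Rightarrow> ('a \<Rightarrow>\<^sub>0 int) set" where
  "ker_mod m f = {p. \<forall>y. m dvd Poly_Mapping.lookup (pushforward f p) y}"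

lemma dvd_lookup_pushforward:
  assumes "\<forall>x. m dvd Poly_Mapping.lookup p x"
  shows "m dvd Poly_Mapping.lookup (pushforward f p) y"
proof -
  have "p = frag_cmul m (Abs_poly_mapping (\<lambda>x. Poly_Mapping.lookup p x div m))"
  proof (rule poly_mapping_eqI)
    have "finite {x. Poly_Mapping.lookup p x div m \<noteq> 0}"
      by (rule finite_subset[of _ "{x. Poly_Mapping.lookup p x \<noteq> 0}"]) auto
    then show "Poly_Mapping.lookup p x = Poly_Mapping.lookup (frag_cmul m (Abs_poly_mapping (\<lambda>x. Poly_Mapping.lookup p x div m))) x" for x
      using assms by simp
  qed
  then show ?thesis by (metis dvd_triv_left lookup_frag_cmul pushforward_cmul)
qed

lemma ker_mod_diff: "p \<in> ker_mod m f \<Longrightarrow> q \<in> ker_mod m f \<Longrightarrow> p - q \<in> ker_mod m f"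
  and ker_mod_add: "p \<in> ker_mod m f \<Longrightarrow> q \<in> ker_mod m f \<Longrightarrow> p + q \<in> ker_mod m f"
  and ker_mod_zero: "0 \<in> ker_mod m f"
  and ker_mod_cmul: "frag_cmul m p \<in> ker_mod m f"
  by (simp_all add: ker_mod_def lookup_minus lookup_add)

lemma ker_mod_sum: "finite A \<Longrightarrow> (\<And>i. i \<in> A \<Longrightarrow> p i \<in> ker_mod m f) \<Longrightarrow> (\<Sum>i\<in>A. p i) \<in> ker_mod m f"
  by (induction A rule: finite_induct) (auto intro: ker_mod_add ker_mod_zero)

lemma ker_mod_mult_left:
  fixes f :: "'a::monoid_add \<Rightarrow> 'b::monoid_mult"
  assumes "\<And>x y. f (x + y) = f x * f y" and "p \<in> ker_mod m f"
  shows "q * p \<in> ker_mod m f"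
  using subset_UNIV
proof (induction q rule: frag_induction)
  case (one x)
  show ?case
    using assms(2) unfolding ker_mod_def
    by (simp add: pushforward_frag_of_mult_left[OF assms(1)] dvd_lookup_pushforward)
qed (simp_all add: left_diff_distrib ker_mod_zero ker_mod_diff)

lemma ker_mod_mult_right:
  fixes f :: "'a::monoid_add \<Rightarrow> 'b::monoid_mult"
  assumes "\<And>x y. f (x + y) = f x * f y" and "p \<in> ker_mod m f"
  shows "p * q \<in> ker_mod m f"
  using subset_UNIV
proof (induction q rule: frag_induction)
  case (one x)
  show ?case
    using assms(2) unfolding ker_mod_def
    by (simp add: pushforward_mult_frag_of_right[OF assms(1)] dvd_lookup_pushforward)
qed (simp_all add: right_diff_distrib ker_mod_zero ker_mod_diff)

lemma twosided_ideal_gen_subset_ker_mod: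
  fixes f :: "'a::monoid_add \<Rightarrow> 'b::monoid_mult"
  assumes "\<And>x y. f (x + y) = f x * f y" and "p \<in> ker_mod m f"
  shows "twosided_ideal_gen p \<subseteq> ker_mod m f"
proof
  fix r assume "r \<in> twosided_ideal_gen p"
  then obtain k :: nat and a b where "r = (\<Sum>i<k. a i * p * b i)"
    unfolding twosided_ideal_gen_def by blast
  moreover have "a i * p * b i \<in> ker_mod m f" for i
    by (intro ker_mod_mult_right[OF assms(1)] ker_mod_mult_left[OF assms])
  ultimately show "r \<in> ker_mod m f" by (simp add: ker_mod_sum)
qed

lemma not_quotient_fg_if_infinite_range:
  fixes f :: "'a::monoid_add \<Rightarrow> 'b"
  assumes "I \<subseteq> ker_mod m f" and "\<not> m dvd 1" and "infinite (range f)"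
  shows "\<not> quotient_fg_Z_module I"
proof
  assume "quotient_fg_Z_module I"
  then obtain S where "finite S"
    and gen: "\<And>r. \<exists>c. r - (\<Sum>s\<in>S. of_int (c s) * s) \<in> I"
    unfolding quotient_fg_Z_module_def by blast
  define F where "F = (\<Union>s\<in>S. Poly_Mapping.keys (pushforward f s))"
  have "finite F" unfolding F_def using \<open>finite S\<close> by simp
  then obtain x where x: "f x \<notin> F"
    using assms(3) by (metis finite_subset image_subsetI)
  obtain c where "frag_of x - (\<Sum>s\<in>S. of_int (c s) * s) \<in> ker_mod m f"
    using gen assms(1) by blast
  then have "m dvd Poly_Mapping.lookup (pushforward f (frag_of x - (\<Sum>s\<in>S. of_int (c s) * s))) (f x)"
    unfolding ker_mod_def by blast
  also have "Poly_Mapping.lookup (pushforward f (frag_of x - (\<Sum>s\<in>S. of_int (c s) * s))) (f x) = 1"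
    using \<open>finite S\<close> x
    by (auto simp: F_def pushforward_sum of_int_mult_poly_mapping lookup_minus lookup_sum in_keys_iff)
  finally show False using assms(2) by simp
qed

lemma one_poly_mapping_eq_frag_of: "(1 :: 'a::monoid_add \<Rightarrow>\<^sub>0 int) = frag_of 0"
  by simp

lemma frag_of_power: "(frag_of (1::nat)) ^ n = frag_of n"
  by (induction n) (simp_all add: mult_single)

lemma numeral_mult_poly_mapping: "(numeral k :: 'a::monoid_add \<Rightarrow>\<^sub>0 int) * p = frag_cmul (numeral k) p"
  by (metis of_int_numeral of_int_mult_poly_mapping)

text \<open>(x - 1)^7 = x^7 - 1 modulo 7, computed in the polynomial ring Z[t], realised as the
  monoid ring of nat, and transported along t \<mapsto> g.\<close>
lemma frag_of_minus_one_pow_7: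
  fixes g :: "'a::monoid_add"
  obtains w where "(frag_of g - 1) ^ 7 = frag_of (sum_list (replicate 7 g)) - 1 - frag_cmul 7 w"
proof -
  define J where "J = pushforward (\<lambda>k::nat. sum_list (replicate k g))"
  have J_mult: "J (p * q) = J p * J q" for p q
    unfolding J_def by (rule pushforward_mult) (simp add: replicate_add)
  have J_one: "J 1 = 1"
    by (simp add: J_def one_poly_mapping_eq_frag_of del: single_one)
  have J_pow: "J (p ^ k) = J p ^ k" for p k
    by (induction k) (simp_all add: J_one J_mult)
  have J_diff: "J (p - q) = J p - J q" and J_cmul: "J (frag_cmul c p) = frag_cmul c (J p)" for p q c
    by (simp_all add: J_def)
  define x :: "nat \<Rightarrow>\<^sub>0 int" where "x = frag_of 1"
  define w where "w = x^6 - 3*x^5 + 5*x^4 - 5*x^3 + 3*x^2 - x"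
  have binomial: "(x - 1)^7 = x^7 - 1 - 7 * w"
    by (simp add: w_def eval_nat_numeral algebra_simps)
  have "(frag_of g - 1)^7 = J ((x - 1)^7)"
    by (simp only: J_pow J_diff J_one) (simp add: x_def J_def)
  also have "\<dots> = J (x^7) - 1 - frag_cmul 7 (J w)"
    by (simp only: binomial J_diff J_one J_cmul numeral_mult_poly_mapping)
  also have "J (x^7) = frag_of (sum_list (replicate 7 g))"
    unfolding x_def frag_of_power by (simp add: J_def)
  finally show ?thesis by (rule that)
qed

lemma sl2_mat_plus: "sl2_mat (g + h) = sl2_mat g ** sl2_mat h"
proof -
  have "det (sl2_mat x) = 1" for x using sl2_mat[of x] by simp
  then show ?thesis
    unfolding plus_sl2z_def by (intro Abs_sl2z_inverse) (simp add: det_mul)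
qed

lemma sl2_mat_zero: "sl2_mat 0 = mat 1"
  unfolding zero_sl2z_def by (rule Abs_sl2z_inverse) (simp add: det_I)

definition mat2_of_sl2z :: "sl2z \<Rightarrow> int mat2" where
  "mat2_of_sl2z g = Mat2 (sl2_mat g $ 1 $ 1) (sl2_mat g $ 1 $ 2) (sl2_mat g $ 2 $ 1) (sl2_mat g $ 2 $ 2)"

lemma mat2_of_sl2z_plus: "mat2_of_sl2z (g + h) = mat2_of_sl2z g * mat2_of_sl2z h"
  by (simp add: mat2_of_sl2z_def sl2_mat_plus matrix_matrix_mult_def sum_2)

lemma mat2_of_sl2z_zero: "mat2_of_sl2z 0 = 1"
  by (simp add: mat2_of_sl2z_def sl2_mat_zero one_mat2_def mat_def)

lemma det2_mat2_of_sl2z: "det2 (mat2_of_sl2z g) = 1"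
  using sl2_mat[of g] by (simp add: mat2_of_sl2z_def det_2)

lemma mat2_of_sl2z_surj:
  assumes "det2 (Mat2 a b c d) = 1"
  obtains g where "mat2_of_sl2z g = Mat2 a b c d"
proof
  let ?A = "(\<chi> i j. if i = 1 then (if j = 1 then a else b) else (if j = 1 then c else d)) :: int^2^2"
  have "det ?A = 1" using assms by (simp add: det_2)
  then have "sl2_mat (Abs_sl2z ?A) = ?A" by (simp add: Abs_sl2z_inverse)
  then show "mat2_of_sl2z (Abs_sl2z ?A) = Mat2 a b c d" by (simp add: mat2_of_sl2z_def)
qed

lemma mat2_of_sl2z_u: "mat2_of_sl2z u = mat_T"
proof -
  have "sl2_mat u = u_mat" unfolding u_def by (rule Abs_sl2z_inverse) (simp add: u_mat_det)
  then show ?thesis by (simp add: mat2_of_sl2z_def u_mat_def mat_T_def)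
qed

definition rho :: "sl2z \<Rightarrow> real mat2" where
  "rho g = rep.hom (mat2_of_sl2z g)"

lemma rho_plus: "rho (g + h) = rho g * rho h"
  by (simp add: rho_def mat2_of_sl2z_plus rep.hom_mult det2_mat2_of_sl2z)

lemma rho_zero: "rho 0 = 1"
  by (simp add: rho_def mat2_of_sl2z_zero rep.hom_one)

lemma rho_sum_list_replicate: "rho (sum_list (replicate k g)) = rho g ^ k"
  by (induction k) (simp_all add: rho_plus rho_zero)

lemma rho_u: "rho u = rho_S ^ 3 * rho_R"
proof -
  have "rho u = rep.hom (mat_S * mat_S * mat_S * mat_R)"
    by (simp add: rho_def mat2_of_sl2z_u mat_T_eq_S_R)
  also have "\<dots> = rho_S ^ 3 * rho_R"
    by (simp add: rep.hom_mult det2_mult det2_mat_S det2_mat_R rep.hom_S rep.hom_R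
        power3_eq_cube mult.assoc)
  finally show ?thesis .
qed

lemma infinite_range_rho: "infinite (range rho)"
proof -
  obtain a b c d where SRSRR: "mat_S * mat_R * mat_S * mat_R * mat_R = Mat2 a b c d"
    by (cases "mat_S * mat_R * mat_S * mat_R * mat_R")
  moreover have "det2 (mat_S * mat_R * mat_S * mat_R * mat_R) = 1"
    by (simp add: det2_mult det2_mat_S det2_mat_R)
  ultimately obtain g where g: "mat2_of_sl2z g = mat_S * mat_R * mat_S * mat_R * mat_R"
    using mat2_of_sl2z_surj by metis
  have "rho g = rho_hyp"
    by (simp add: rho_def g rho_hyp_def rep.hom_mult det2_mult det2_mat_S det2_mat_R
        rep.hom_S rep.hom_R)
  then have "range (\<lambda>k. rho_hyp ^ k) \<subseteq> range rho"
    by (metis image_subsetI rangeI rho_sum_list_replicate)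
  then show ?thesis
    using inj_rho_hyp_power range_inj_infinite finite_subset by blast
qed

lemma grp_elt_u_minus_one_pow_7_in_ker_mod: "(grp_elt u - 1 :: zsl2) ^ 7 \<in> ker_mod 7 rho"
proof -
  obtain w where w: "(grp_elt u - 1 :: zsl2) ^ 7 = grp_elt (sum_list (replicate 7 u)) - 1 - frag_cmul 7 w"
    unfolding grp_elt_def by (rule frag_of_minus_one_pow_7)
  have "pushforward rho (grp_elt (sum_list (replicate 7 u))) = pushforward rho 1"
    by (simp add: grp_elt_def rho_sum_list_replicate rho_u rho_S_cube_R_pow_7
        one_poly_mapping_eq_frag_of rho_zero del: single_one)
  then have "grp_elt (sum_list (replicate 7 u)) - 1 \<in> ker_mod 7 rho"
    by (simp add: ker_mod_def)
  then show ?thesis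
    unfolding w by (rule ker_mod_diff[OF _ ker_mod_cmul])
qed

theorem proposition2:
  fixes n :: nat
  assumes "n \<ge> 7"
  shows "\<not> quotient_fg_Z_module
           (twosided_ideal_gen ((grp_elt u - 1 :: zsl2) ^ n))"
proof -
  have "(grp_elt u - 1 :: zsl2) ^ n = (grp_elt u - 1) ^ (n - 7) * (grp_elt u - 1) ^ 7"
    using assms by (simp flip: power_add)
  then have "(grp_elt u - 1 :: zsl2) ^ n \<in> ker_mod 7 rho"
    using ker_mod_mult_left[of rho, OF rho_plus grp_elt_u_minus_one_pow_7_in_ker_mod] by simp
  then have "twosided_ideal_gen ((grp_elt u - 1 :: zsl2) ^ n) \<subseteq> ker_mod 7 rho"
    by (rule twosided_ideal_gen_subset_ker_mod[of rho, OF rho_plus])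
  then show ?thesis
    by (rule not_quotient_fg_if_infinite_range) (simp_all add: infinite_range_rho)
qed

end
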